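(* Let $\tau:SU(2)\to U(H)$ be a strongly continuous unitary representation on a finite-dimensional Hilbert space $H$, and let $E_m=E_m(\tau,H)$ and $\iota_{k,m}$ be as in the context. Then $(E,\iota)$ is an $SU(2)$-subproduct system (of Hilbert spaces, i.e. over $B=\mathbb{C}$): for all $k,m$, $\iota_{k,m}$ maps $E_{k+m}$ into $E_k\otimes E_m$, and the maps $\iota_{k,m}$ are $SU(2)$-equivariant isometries satisfying the subproduct system axioms.
   Context: $\det(\tau,H)=\{\xi\in H\otimes H:(\tau(g)\otimes\tau(g))\xi=\xi\ \forall g\in SU(2)\}$. For $m\ge2$ let $K_m=\sum_{i=1}^{m-1}H^{\otimes(i-1)}\otimes\det(\tau,H)\otimes H^{\otimes(m-i-1)}\subseteq H^{\otimes m}$ and $E_m=K_m^\perp$; $E_1=H$, $E_0=\mathbb{C}$. $SU(2)$ acts on $E_m$ by the restriction of $\tau^{\otimes m}$ (which leaves $E_m$ invariant), on $E_1$ by $\tau$ and trivially on $E_0$. $\iota_{k,m}:E_{k+m}\to E_k\otimes E_m$ is induced by the canonical identification $H^{\otimes(k+m)}\cong H^{\otimes k}\otimes H^{\otimes m}$ (with $E_0\otimes E_m=E_m=E_m\otimes E_0$). A subproduct system of Hilbert spaces is a sequence $\{E_m\}_{m\in\mathbb{N}_0}$ of Hilbert spaces with $E_0=\mathbb{C}$ and isometries $\iota_{k,m}:E_{k+m}\to E_k\otimes E_m$ such that $\iota_{0,m},\iota_{m,0}$ are the canonical identifications and $(1_{E_k}\otimes\iota_{l,m})\iota_{k,l+m}=(\iota_{k,l}\otimes1_{E_m})\iota_{k+l,m}$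 for all $k,l,m$; it is an $SU(2)$-subproduct system if each $E_m$ carries a strongly continuous unitary $SU(2)$-representation (trivial on $E_0$) and all $\iota_{k,m}$ are equivariant for the diagonal actions. *)

theory Defs
  imports "HOL-Analysis.Analysis"
begin

text \<open>H is C^d, realised as functions on the alphabet {..<d}.
  H^{\<otimes>m} is realised as functions on words of length m over {..<d}
  (supported there), a two-fold tensor product of such spaces as functions on
  pairs of words, a three-fold one as functions on triples. The canonical
  identification H^{\<otimes>(k+m)} = H^{\<otimes>k} \<otimes> H^{\<otimes>m} is
  splitting a word of length k+m into its first k and last m letters.\<close>

definition words :: "nat \<Rightarrow> nat \<Rightarrow> nat list set" where
  "words d m = {w. length w = m \<and> set w \<subseteq> {..<d}}"

definition tens :: "nat \<Rightarrow> nat \<Rightarrow> (nat list \<Rightarrow> complex) set" where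
  "tens d m = {f. \<forall>w. f w \<noteq> 0 \<longrightarrow> w \<in> words d m}"

definition ip :: "'a set \<Rightarrow> ('a \<Rightarrow> complex) \<Rightarrow> ('a \<Rightarrow> complex) \<Rightarrow> complex" where
  "ip A f g = (\<Sum>x\<in>A. cnj (f x) * g x)"

definition cspan :: "('a \<Rightarrow> complex) set \<Rightarrow> ('a \<Rightarrow> complex) set" where
  "cspan S = {f. \<exists>T c. finite T \<and> T \<subseteq> S \<and> f = (\<lambda>x. \<Sum>t\<in>T. c t * t x)}"

definition csubspace :: "('a \<Rightarrow> complex) set \<Rightarrow> bool" where
  "csubspace V \<longleftrightarrow> (\<lambda>x. 0) \<in> V \<and> (\<forall>f\<in>V. \<forall>g\<in>V. \<forall>c. (\<lambda>x. c * f x + g x) \<in> V)"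

definition clinear_on :: "('a \<Rightarrow> complex) set \<Rightarrow> (('a \<Rightarrow> complex) \<Rightarrow> ('b \<Rightarrow> complex)) \<Rightarrow> bool" where
  "clinear_on V T \<longleftrightarrow> (\<forall>f\<in>V. \<forall>g\<in>V. \<forall>c.
      T (\<lambda>x. c * f x + g x) = (\<lambda>y. c * T f y + T g y))"

definition htensor :: "('a \<Rightarrow> complex) set \<Rightarrow> ('b \<Rightarrow> complex) set \<Rightarrow> ('a \<times> 'b \<Rightarrow> complex) set" where
  "htensor V W = cspan {(\<lambda>(u, v). a u * b v) | a b. a \<in> V \<and> b \<in> W}"

definition map_tensor :: "(('a \<Rightarrow> complex) \<Rightarrow> ('a \<Rightarrow> complex)) \<Rightarrow> (('b \<Rightarrow> complex) \<Rightarrow> ('b \<Rightarrow> complex))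
    \<Rightarrow> ('a \<times> 'b \<Rightarrow> complex) \<Rightarrow> ('a \<times> 'b \<Rightarrow> complex)" where
  "map_tensor A B F = (\<lambda>(u, v). A (\<lambda>u'. B (\<lambda>v'. F (u', v')) v) u)"

definition id_tensor :: "(('b \<Rightarrow> complex) \<Rightarrow> ('c \<Rightarrow> complex)) \<Rightarrow> ('a \<times> 'b \<Rightarrow> complex) \<Rightarrow> ('a \<times> 'c \<Rightarrow> complex)" where
  "id_tensor J F = (\<lambda>(u, p). J (\<lambda>y. F (u, y)) p)"

definition tensor_id :: "(('a \<Rightarrow> complex) \<Rightarrow> ('c \<Rightarrow> complex)) \<Rightarrow> ('a \<times> 'b \<Rightarrow> complex) \<Rightarrow> ('c \<times> 'b \<Rightarrow> complex)" where
  "tensor_id J F = (\<lambda>(q, w). J (\<lambda>x. F (x, w)) q)"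

definition adj2 :: "complex^2^2 \<Rightarrow> complex^2^2" where
  "adj2 U = (\<chi> i j. cnj (U $ j $ i))"

definition SU2 :: "(complex^2^2) set" where
  "SU2 = {U. adj2 U ** U = mat 1 \<and> det U = 1}"

text \<open>A strongly continuous unitary representation of SU(2) on H = C^d, given by matrices
  (only entries i,j < d are relevant).\<close>
definition unitary_rep_SU2 :: "nat \<Rightarrow> (complex^2^2 \<Rightarrow> nat \<Rightarrow> nat \<Rightarrow> complex) \<Rightarrow> bool" where
  "unitary_rep_SU2 d \<tau> \<longleftrightarrow>
     (\<forall>g\<in>SU2. \<forall>h\<in>SU2. \<forall>i<d. \<forall>j<d. \<tau> (g ** h) i j = (\<Sum>k<d. \<tau> g i k * \<tau> h k j)) \<and>
     (\<forall>i<d. \<forall>j<d. \<tau> (mat 1) i j = (if i = j then 1 else 0)) \<and>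
     (\<forall>g\<in>SU2. \<forall>i<d. \<forall>j<d. (\<Sum>k<d. cnj (\<tau> g k i) * \<tau> g k j) = (if i = j then 1 else 0)) \<and>
     (\<forall>\<xi>::nat \<Rightarrow> complex. \<forall>i<d. continuous_on SU2 (\<lambda>g. \<Sum>j<d. \<tau> g i j * \<xi> j))"

definition tensrep :: "nat \<Rightarrow> (complex^2^2 \<Rightarrow> nat \<Rightarrow> nat \<Rightarrow> complex) \<Rightarrow> nat \<Rightarrow> complex^2^2
    \<Rightarrow> (nat list \<Rightarrow> complex) \<Rightarrow> (nat list \<Rightarrow> complex)" where
  "tensrep d \<tau> m g f = (\<lambda>w. if w \<in> words d m
      then (\<Sum>v\<in>words d m. (\<Prod>i<m. \<tau> g (w ! i) (v ! i)) * f v) else 0)"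

definition tprod :: "nat \<Rightarrow> (nat list \<Rightarrow> complex) \<Rightarrow> (nat list \<Rightarrow> complex) \<Rightarrow> (nat list \<Rightarrow> complex)" where
  "tprod k a b = (\<lambda>w. a (take k w) * b (drop k w))"

definition detsp :: "nat \<Rightarrow> (complex^2^2 \<Rightarrow> nat \<Rightarrow> nat \<Rightarrow> complex) \<Rightarrow> (nat list \<Rightarrow> complex) set" where
  "detsp d \<tau> = {\<xi> \<in> tens d 2. \<forall>g\<in>SU2. tensrep d \<tau> 2 g \<xi> = \<xi>}"

definition Ksp :: "nat \<Rightarrow> (complex^2^2 \<Rightarrow> nat \<Rightarrow> nat \<Rightarrow> complex) \<Rightarrow> nat \<Rightarrow> (nat list \<Rightarrow> complex) set" where
  "Ksp d \<tau> m = cspan (\<Union>i\<in>{1..m-1}.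
      {tprod (i - 1) a (tprod 2 z b) | a z b.
         a \<in> tens d (i - 1) \<and> z \<in> detsp d \<tau> \<and> b \<in> tens d (m - i - 1)})"

text \<open>E_m = K_m^\<perp> inside H^{\<otimes>m} (for m = 0, 1 this is C, resp. H, since K_m = 0)\<close>
definition Esp :: "nat \<Rightarrow> (complex^2^2 \<Rightarrow> nat \<Rightarrow> nat \<Rightarrow> complex) \<Rightarrow> nat \<Rightarrow> (nat list \<Rightarrow> complex) set" where
  "Esp d \<tau> m = {\<xi> \<in> tens d m. \<forall>\<eta>\<in>Ksp d \<tau> m. ip (words d m) \<eta> \<xi> = 0}"

definition iota :: "nat \<Rightarrow> nat \<Rightarrow> (nat list \<Rightarrow> complex) \<Rightarrow> (nat list \<times> nat list \<Rightarrow> complex)" where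
  "iota k m \<xi> = (\<lambda>(u, v). if length u = k then \<xi> (u @ v) else 0)"

text \<open>SU(2)-subproduct system (in the model where E_m is a subspace of H^{\<otimes>m},
  represented by functions on words of length m over {..<d}), with representations \<sigma> m on E m.\<close>
definition SU2_subproduct_system :: "nat \<Rightarrow> (nat \<Rightarrow> (nat list \<Rightarrow> complex) set)
    \<Rightarrow> (nat \<Rightarrow> nat \<Rightarrow> (nat list \<Rightarrow> complex) \<Rightarrow> (nat list \<times> nat list \<Rightarrow> complex))
    \<Rightarrow> (nat \<Rightarrow> complex^2^2 \<Rightarrow> (nat list \<Rightarrow> complex) \<Rightarrow> (nat list \<Rightarrow> complex)) \<Rightarrow> bool" where
  "SU2_subproduct_system d E \<iota> \<sigma> \<longleftrightarrow>
     \<comment> \<open>Hilbert spaces, E_0 = C\<close>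
     (\<forall>m. csubspace (E m) \<and> E m \<subseteq> tens d m) \<and>
     E 0 = {(\<lambda>w. if w = [] then c else 0) | c. True} \<and>
     \<comment> \<open>isometries E_{k+m} \<rightarrow> E_k \<otimes> E_m\<close>
     (\<forall>k m. clinear_on (E (k + m)) (\<iota> k m) \<and>
        (\<forall>\<xi>\<in>E (k + m). \<iota> k m \<xi> \<in> htensor (E k) (E m)) \<and>
        (\<forall>\<xi>\<in>E (k + m). \<forall>\<eta>\<in>E (k + m).
           ip (words d k \<times> words d m) (\<iota> k m \<xi>) (\<iota> k m \<eta>) = ip (words d (k + m)) \<xi> \<eta>)) \<and>
     \<comment> \<open>\<iota>_{0,m}, \<iota>_{m,0} are the canonical identifications\<close>
     (\<forall>m. \<forall>\<xi>\<in>E m. \<iota> 0 m \<xi> = (\<lambda>(u, v). if u = [] then \<xi> v else 0)) \<and>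
     (\<forall>m. \<forall>\<xi>\<in>E m. \<iota> m 0 \<xi> = (\<lambda>(u, v). if v = [] then \<xi> u else 0)) \<and>
     \<comment> \<open>coassociativity\<close>
     (\<forall>k l m. \<forall>\<xi>\<in>E (k + l + m). \<forall>u v w.
        id_tensor (\<iota> l m) (\<iota> k (l + m) \<xi>) (u, (v, w)) =
        tensor_id (\<iota> k l) (\<iota> (k + l) m \<xi>) ((u, v), w)) \<and>
     \<comment> \<open>strongly continuous unitary representations, trivial on E_0\<close>
     (\<forall>m. \<forall>g\<in>SU2. clinear_on (E m) (\<sigma> m g) \<and> \<sigma> m g ` E m = E m \<and>
        (\<forall>\<xi>\<in>E m. \<forall>\<eta>\<in>E m. ip (words d m) (\<sigma> m g \<xi>) (\<sigma> m g \<eta>) = ip (words d m) \<xi> \<eta>)) \<and>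
     (\<forall>m. \<forall>g\<in>SU2. \<forall>h\<in>SU2. \<forall>\<xi>\<in>E m. \<sigma> m (g ** h) \<xi> = \<sigma> m g (\<sigma> m h \<xi>)) \<and>
     (\<forall>m. \<forall>\<xi>\<in>E m. \<sigma> m (mat 1) \<xi> = \<xi>) \<and>
     (\<forall>m. \<forall>\<xi>\<in>E m. \<forall>w. continuous_on SU2 (\<lambda>g. \<sigma> m g \<xi> w)) \<and>
     (\<forall>g\<in>SU2. \<forall>\<xi>\<in>E 0. \<sigma> 0 g \<xi> = \<xi>) \<and>
     \<comment> \<open>equivariance for the diagonal actions\<close>
     (\<forall>k m. \<forall>g\<in>SU2. \<forall>\<xi>\<in>E (k + m).
        \<iota> k m (\<sigma> (k + m) g \<xi>) = map_tensor (\<sigma> k g) (\<sigma> m g) (\<iota> k m \<xi>))"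

end

theory Submission
  imports Defs
begin

text \<open>
  K_m is spanned by tensors with a det(\<tau>,H) factor in two adjacent slots, so both
  K_k \<otimes> H^(\<otimes>m) and H^(\<otimes>k) \<otimes> K_m lie in K_(k+m). Hence, viewing \<xi> \<in> E_(k+m) as a
  function of a pair of words, each of its slices in the first (second) variable is orthogonal
  to K_k (K_m), i.e. lies in E_k (E_m); and a function of two variables whose slices lie in two
  subspaces lies in their tensor product. So \<iota>_(k,m) maps E_(k+m) into E_k \<otimes> E_m, and
  isometry and coassociativity are just regroupings of words. Since det(\<tau>,H) consists of
  \<tau>\<otimes>\<tau>-fixed vectors, K_m is \<tau>^(\<otimes>m)-invariant, hence so is its orthogonal complement E_m by
  unitarity; equivariance of \<iota>_(k,m) is the factorisation of \<tau>^(\<otimes>(k+m)).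
\<close>

lemma finite_words: "finite (words d m)"
  using finite_lists_length_eq[of "{..<d}" m] by (simp add: words_def conj_commute)

lemma words_0: "words d 0 = {[]}"
  by (auto simp: words_def)

lemma words_length: "w \<in> words d m \<Longrightarrow> length w = m"
  by (simp add: words_def)

lemma words_nth_less: "w \<in> words d m \<Longrightarrow> i < m \<Longrightarrow> w ! i < d"
  by (auto simp: words_def dest: nth_mem)

lemma append_in_words_iff:
  "length u = k \<Longrightarrow> u @ v \<in> words d (k + m) \<longleftrightarrow> u \<in> words d k \<and> v \<in> words d m"
  by (auto simp: words_def)

lemma sum_words_add:
  "(\<Sum>w\<in>words d (k + m). h w) = (\<Sum>u\<in>words d k. \<Sum>v\<in>words d m. h (u @ v))"
proof -
  have "bij_betw (\<lambda>(u, v). u @ v) (words d k \<times> words d m) (words d (k + m))"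
    by (rule bij_betw_byWitness[where f' = "\<lambda>w. (take k w, drop k w)"])
      (auto simp: words_def dest: in_set_takeD in_set_dropD)
  from sum.reindex_bij_betw[OF this, of h] show ?thesis
    by (simp add: sum.cartesian_product split_def)
qed

lemma words_Suc: "words d (Suc m) = (\<lambda>(j, w). j # w) ` ({..<d} \<times> words d m)"
proof
  show "words d (Suc m) \<subseteq> (\<lambda>(j, w). j # w) ` ({..<d} \<times> words d m)"
  proof
    fix w assume "w \<in> words d (Suc m)"
    then obtain j w' where "w = j # w'" "j < d" "w' \<in> words d m"
      by (cases w) (auto simp: words_def)
    then show "w \<in> (\<lambda>(j, w). j # w) ` ({..<d} \<times> words d m)"
      by force
  qed
qed (auto simp: words_def)

lemma sum_words_prod:
  fixes f :: "nat \<Rightarrow> nat \<Rightarrow> 'a::comm_semiring_1"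
  shows "(\<Sum>w\<in>words d m. \<Prod>i<m. f i (w ! i)) = (\<Prod>i<m. \<Sum>j<d. f i j)"
proof (induction m arbitrary: f)
  case 0
  then show ?case
    by (simp add: words_0)
next
  case (Suc m)
  have "inj_on (\<lambda>(j, w). j # w) ({..<d} \<times> words d m)"
    by (auto simp: inj_on_def)
  then have "(\<Sum>w\<in>words d (Suc m). \<Prod>i<Suc m. f i (w ! i))
      = (\<Sum>j<d. \<Sum>w\<in>words d m. f 0 j * (\<Prod>i<m. f (Suc i) (w ! i)))"
    by (simp add: words_Suc sum.reindex sum.cartesian_product prod.lessThan_Suc_shift split_def
        del: prod.lessThan_Suc)
  also have "\<dots> = (\<Sum>j<d. f 0 j * (\<Prod>i<m. \<Sum>j<d. f (Suc i) j))"
    by (simp add: Suc.IH[of "\<lambda>i. f (Suc i)"] sum_distrib_left[symmetric])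
  also have "\<dots> = (\<Prod>i<Suc m. \<Sum>j<d. f i j)"
    by (simp add: prod.lessThan_Suc_shift sum_distrib_right del: prod.lessThan_Suc)
  finally show ?case .
qed

lemma prod_lessThan_add:
  fixes f :: "nat \<Rightarrow> 'a::comm_monoid_mult"
  shows "(\<Prod>i<k + m. f i) = (\<Prod>i<k. f i) * (\<Prod>i<m. f (k + i))"
  by (induction m) (simp_all add: mult.assoc)

lemma prod_nth_append:
  assumes "length u = k" "length u' = k"
  shows "(\<Prod>i<k + m. f ((u @ v) ! i) ((u' @ v') ! i)) =
    (\<Prod>i<k. f (u ! i) (u' ! i)) * (\<Prod>i<m. f (v ! i) (v' ! i))"
  using assms by (simp add: prod_lessThan_add nth_append)

lemma prod_nth_eq_indicator:
  assumes "length w = m" "length v = m"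
  shows "(\<Prod>i<m. if w ! i = v ! i then 1 else 0 :: 'a::comm_semiring_1) = (if w = v then 1 else 0)"
proof (cases "w = v")
  case False
  then obtain i where "i < m" "w ! i \<noteq> v ! i"
    using assms nth_equalityI by metis
  then show ?thesis
    using False by (subst prod_zero) auto
qed simp

section \<open>Complex spans and tensor products of subspaces\<close>

lemma csubspace_zero: "csubspace V \<Longrightarrow> (\<lambda>x. 0) \<in> V"
  by (simp add: csubspace_def)

lemma csubspace_lincomb: "csubspace V \<Longrightarrow> f \<in> V \<Longrightarrow> g \<in> V \<Longrightarrow> (\<lambda>x. c * f x + g x) \<in> V"
  by (simp add: csubspace_def)

lemma csubspace_scale: "csubspace V \<Longrightarrow> f \<in> V \<Longrightarrow> (\<lambda>x. c * f x) \<in> V"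
  using csubspace_lincomb[of V f "\<lambda>x. 0" c] csubspace_zero[of V] by simp

lemma csubspace_sum:
  assumes "csubspace V" "finite T" "\<And>t. t \<in> T \<Longrightarrow> F t \<in> V"
  shows "(\<lambda>x. \<Sum>t\<in>T. c t * F t x) \<in> V"
  using assms(2,3)
proof (induction T rule: finite_induct)
  case empty
  then show ?case
    using csubspace_zero[OF assms(1)] by simp
next
  case (insert t T)
  then show ?case
    using csubspace_lincomb[OF assms(1), of "F t" "\<lambda>x. \<Sum>t\<in>T. c t * F t x" "c t"] by simp
qed

lemma cspan_superset: "t \<in> S \<Longrightarrow> t \<in> cspan S"
  unfolding cspan_def by (auto intro!: exI[of _ "{t}"] exI[of _ "\<lambda>_. 1"])

lemma cspan_minimal: "csubspace V \<Longrightarrow> S \<subseteq> V \<Longrightarrow> cspan S \<subseteq> V"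
  unfolding cspan_def using csubspace_sum[of V _ "\<lambda>t. t"] by blast

lemma csubspace_cspan: "csubspace (cspan S)"
  unfolding csubspace_def
proof (intro conjI ballI allI)
  show "(\<lambda>x. 0) \<in> cspan S"
    unfolding cspan_def by (intro CollectI exI[of _ "{}"]) simp
next
  fix f g c
  assume "f \<in> cspan S" "g \<in> cspan S"
  then obtain T1 c1 T2 c2 where T: "finite T1" "T1 \<subseteq> S" "finite T2" "T2 \<subseteq> S"
    and f: "f = (\<lambda>x. \<Sum>t\<in>T1. c1 t * t x)" and g: "g = (\<lambda>x. \<Sum>t\<in>T2. c2 t * t x)"
    unfolding cspan_def by blast
  have f': "f = (\<lambda>x. \<Sum>t\<in>T1 \<union> T2. (if t \<in> T1 then c1 t else 0) * t x)"
    unfolding f using T by (intro ext sum.mono_neutral_cong_left) auto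
  have g': "g = (\<lambda>x. \<Sum>t\<in>T1 \<union> T2. (if t \<in> T2 then c2 t else 0) * t x)"
    unfolding g using T by (intro ext sum.mono_neutral_cong_left) auto
  have "(\<lambda>x. c * f x + g x) =
      (\<lambda>x. \<Sum>t\<in>T1 \<union> T2. (c * (if t \<in> T1 then c1 t else 0) + (if t \<in> T2 then c2 t else 0)) * t x)"
    unfolding f' g' by (simp only: sum.distrib sum_distrib_left distrib_right mult.assoc)
  moreover have "finite (T1 \<union> T2)" "T1 \<union> T2 \<subseteq> S"
    using T by auto
  ultimately show "(\<lambda>x. c * f x + g x) \<in> cspan S"
    unfolding cspan_def by (intro CollectI exI conjI)
qed

lemma cspan_mono: "S \<subseteq> S' \<Longrightarrow> cspan S \<subseteq> cspan S'"
  using cspan_minimal[OF csubspace_cspan] cspan_superset by blast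

lemma cspan_map:
  assumes "f \<in> cspan S" "\<And>t. t \<in> S \<Longrightarrow> \<Phi> t \<in> S'"
    and "\<And>T c. \<Phi> (\<lambda>x. \<Sum>t\<in>T. c t * t x) = (\<lambda>x. \<Sum>t\<in>T. c t * \<Phi> t x)"
  shows "\<Phi> f \<in> cspan S'"
proof -
  obtain T c where T: "finite T" "T \<subseteq> S" and f: "f = (\<lambda>x. \<Sum>t\<in>T. c t * t x)"
    using assms(1) unfolding cspan_def by blast
  have "(\<lambda>x. \<Sum>t\<in>T. c t * \<Phi> t x) \<in> cspan S'"
    using T assms(2) by (intro csubspace_sum[OF csubspace_cspan] cspan_superset) auto
  then show ?thesis
    unfolding f assms(3) .
qed

lemma csubspace_htensor: "csubspace (htensor V W)"
  by (simp add: htensor_def csubspace_cspan)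

lemma htensor_mono_left: "V \<subseteq> V' \<Longrightarrow> htensor V W \<subseteq> htensor V' W"
  unfolding htensor_def by (rule cspan_mono) blast

lemma elementary_in_htensor: "a \<in> V \<Longrightarrow> b \<in> W \<Longrightarrow> (\<lambda>(u, v). a u * b v) \<in> htensor V W"
  unfolding htensor_def by (rule cspan_superset) blast

text \<open>By induction on a finite set A outside which all of V vanishes: if some e \<in> V has
  e a0 = 1, subtracting e \<otimes> F(a0, -) from F leaves a function whose slices lie in the
  subspace of V vanishing at a0.\<close>

lemma htensor_if_slices:
  assumes "finite A" "csubspace V" "csubspace W"
    and "\<And>f a. f \<in> V \<Longrightarrow> a \<notin> A \<Longrightarrow> f a = 0"
    and "\<And>b. (\<lambda>a. F (a, b)) \<in> V" "\<And>a. (\<lambda>b. F (a, b)) \<in> W"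
  shows "F \<in> htensor V W"
  using assms
proof (induction A arbitrary: V F rule: finite_induct)
  case empty
  have "F = (\<lambda>x. 0)"
  proof
    fix x
    show "F x = 0"
      using empty.prems(3)[OF empty.prems(4)[of "snd x"], of "fst x"] by simp
  qed
  then show ?case
    using csubspace_zero[OF csubspace_htensor] by simp
next
  case (insert a0 A V F)
  show ?case
  proof (cases "\<exists>e\<in>V. e a0 = 1")
    case False
    have "f a0 = 0" if "f \<in> V" for f
      using False csubspace_scale[OF insert.prems(1) that, of "1 / f a0"] by (cases "f a0 = 0") auto
    then have "f a = 0" if "f \<in> V" "a \<notin> A" for f a
      using insert.prems(3) that by (cases "a = a0") auto
    then show ?thesis
      by (rule insert.IH[OF insert.prems(1,2) _ insert.prems(4,5)])
  next
    case True
    then obtain e where e: "e \<in> V" "e a0 = 1"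
      by blast
    define V0 where "V0 = {f \<in> V. f a0 = 0}"
    define G where "G = (\<lambda>(a, b). (- F (a0, b)) * e a + F (a, b))"
    have V0: "csubspace V0"
      using insert.prems(1) by (simp add: V0_def csubspace_def)
    have V0_vanishes: "f a = 0" if "f \<in> V0" "a \<notin> A" for f a
      using insert.prems(3) that by (cases "a = a0") (auto simp: V0_def)
    have G_left: "(\<lambda>a. G (a, b)) \<in> V0" for b
      using csubspace_lincomb[OF insert.prems(1) e(1) insert.prems(4)[of b], of "- F (a0, b)"] e(2)
      unfolding V0_def G_def by simp
    have G_right: "(\<lambda>b. G (a, b)) \<in> W" for a
      using csubspace_lincomb[OF insert.prems(2) insert.prems(5)[of a0] insert.prems(5)[of a],
          of "- e a"]
      by (simp add: G_def mult.commute)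
    have "G \<in> htensor V0 W"
      by (rule insert.IH) (fact V0 insert.prems(2) V0_vanishes G_left G_right)+
    then have "G \<in> htensor V W"
      using htensor_mono_left[of V0 V W] by (auto simp: V0_def)
    moreover have "(\<lambda>(a, b). e a * F (a0, b)) \<in> htensor V W"
      using e(1) insert.prems(5) by (rule elementary_in_htensor)
    ultimately have "(\<lambda>x. 1 * G x + (\<lambda>(a, b). e a * F (a0, b)) x) \<in> htensor V W"
      by (rule csubspace_lincomb[OF csubspace_htensor])
    then show ?thesis
      by (simp add: G_def split_def)
  qed
qed

lemma csubspace_tens: "csubspace (tens d m)"
  unfolding csubspace_def tens_def by (auto; metis add.right_neutral mult_zero_right)

lemma tens_vanishes: "f \<in> tens d m \<Longrightarrow> w \<notin> words d m \<Longrightarrow> f w = 0"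
  by (auto simp: tens_def)

lemma take_drop_in_words: "take k w \<in> words d k \<Longrightarrow> drop k w \<in> words d m \<Longrightarrow> w \<in> words d (k + m)"
  by (metis append_in_words_iff append_take_drop_id words_length)

lemma tprod_in_tens: "a \<in> tens d k \<Longrightarrow> b \<in> tens d m \<Longrightarrow> tprod k a b \<in> tens d (k + m)"
  by (auto simp: tens_def tprod_def intro: take_drop_in_words)

lemma tprod_assoc: "tprod k a (tprod l b c) = tprod (k + l) (tprod k a b) c"
  by (simp add: tprod_def drop_take add.commute mult.assoc)

lemma tprod_sum_left: "tprod k (\<lambda>x. \<Sum>t\<in>T. c t * t x) b = (\<lambda>x. \<Sum>t\<in>T. c t * tprod k t b x)"
  by (simp add: tprod_def sum_distrib_right mult.assoc)

lemma tprod_sum_right: "tprod k a (\<lambda>x. \<Sum>t\<in>T. c t * t x) = (\<lambda>x. \<Sum>t\<in>T. c t * tprod k a t x)"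
  by (simp add: tprod_def sum_distrib_left mult.left_commute)

definition word_basis :: "nat list \<Rightarrow> nat list \<Rightarrow> complex" where
  "word_basis u = (\<lambda>w. if w = u then 1 else 0)"

lemma word_basis_in_tens: "u \<in> words d k \<Longrightarrow> word_basis u \<in> tens d k"
  by (simp add: word_basis_def tens_def)

lemma ip_tprod_word_basis_right:
  assumes "v \<in> words d m"
  shows "ip (words d (k + m)) (tprod k \<eta> (word_basis v)) \<xi> = (\<Sum>u\<in>words d k. cnj (\<eta> u) * \<xi> (u @ v))"
  using assms finite_words
  by (simp add: ip_def tprod_def sum_words_add words_length word_basis_def if_distrib if_distribR
      cong: if_cong)

lemma ip_tprod_word_basis_left:
  assumes "u \<in> words d k"
  shows "ip (words d (k + m)) (tprod k (word_basis u) \<eta>) \<xi> = (\<Sum>v\<in>words d m. cnj (\<eta> v) * \<xi> (u @ v))"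
  using assms finite_words
  by (simp add: ip_def tprod_def sum_words_add words_length word_basis_def if_distrib if_distribR
      sum.If_cases cong: if_cong)

section \<open>The tensor power representation\<close>

lemma
  assumes "unitary_rep_SU2 d \<tau>"
  shows unitary_rep_SU2_mult:
      "g \<in> SU2 \<Longrightarrow> h \<in> SU2 \<Longrightarrow> i < d \<Longrightarrow> j < d \<Longrightarrow> \<tau> (g ** h) i j = (\<Sum>k<d. \<tau> g i k * \<tau> h k j)"
    and unitary_rep_SU2_one: "i < d \<Longrightarrow> j < d \<Longrightarrow> \<tau> (mat 1) i j = (if i = j then 1 else 0)"
    and unitary_rep_SU2_orthonormal: "g \<in> SU2 \<Longrightarrow> i < d \<Longrightarrow> j < d \<Longrightarrow>
      (\<Sum>k<d. cnj (\<tau> g k i) * \<tau> g k j) = (if i = j then 1 else 0)"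
  using assms by (simp_all add: unitary_rep_SU2_def)

lemma unitary_rep_SU2_continuous_entry:
  assumes "unitary_rep_SU2 d \<tau>" "i < d" "j < d"
  shows "continuous_on SU2 (\<lambda>g. \<tau> g i j)"
proof -
  have "continuous_on SU2 (\<lambda>g. \<Sum>k<d. \<tau> g i k * (if k = j then 1 else 0))"
    using assms(1,2) by (simp add: unitary_rep_SU2_def)
  then show ?thesis
    using assms(3) by (simp add: if_distrib cong: if_cong)
qed

lemma tensrep_in_tens: "tensrep d \<tau> m g f \<in> tens d m"
  by (simp add: tens_def tensrep_def)

lemma tensrep_lincomb:
  "tensrep d \<tau> m g (\<lambda>x. c * f x + h x) = (\<lambda>y. c * tensrep d \<tau> m g f y + tensrep d \<tau> m g h y)"
  by (auto simp: tensrep_def sum_distrib_left sum.distrib algebra_simps)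

lemma tensrep_sum:
  "tensrep d \<tau> m g (\<lambda>x. \<Sum>t\<in>T. c t * F t x) = (\<lambda>x. \<Sum>t\<in>T. c t * tensrep d \<tau> m g (F t) x)"
proof
  fix w
  have "(\<Sum>v\<in>words d m. (\<Prod>i<m. \<tau> g (w ! i) (v ! i)) * (\<Sum>t\<in>T. c t * F t v))
      = (\<Sum>t\<in>T. c t * (\<Sum>v\<in>words d m. (\<Prod>i<m. \<tau> g (w ! i) (v ! i)) * F t v))"
    by (simp add: sum_distrib_left mult.left_commute sum.swap[of _ "words d m"])
  then show "tensrep d \<tau> m g (\<lambda>x. \<Sum>t\<in>T. c t * F t x) w = (\<Sum>t\<in>T. c t * tensrep d \<tau> m g (F t) w)"
    by (simp add: tensrep_def)
qed

lemma tensrep_0: "f \<in> tens d 0 \<Longrightarrow> tensrep d \<tau> 0 g f = f"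
  by (intro ext) (auto simp: tensrep_def words_0 tens_def)

lemma tensrep_tprod:
  "tensrep d \<tau> (k + m) g (tprod k a b) = tprod k (tensrep d \<tau> k g a) (tensrep d \<tau> m g b)"
proof
  fix w
  show "tensrep d \<tau> (k + m) g (tprod k a b) w = tprod k (tensrep d \<tau> k g a) (tensrep d \<tau> m g b) w"
  proof (cases "w \<in> words d (k + m)")
    case False
    then show ?thesis
      by (auto simp: tensrep_def tprod_def intro: take_drop_in_words)
  next
    case True
    define u v where "u = take k w" and "v = drop k w"
    have w: "w = u @ v" and u: "length u = k"
      using True by (simp_all add: u_def v_def words_length)
    then have "u \<in> words d k" "v \<in> words d m"
      using True append_in_words_iff by blast+
    then show ?thesis
      using u by (simp add: w tensrep_def tprod_def sum_words_add words_length prod_nth_append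
          sum_product append_in_words_iff mult_ac cong: sum.cong)
  qed
qed

lemma tensrep_mult:
  assumes "unitary_rep_SU2 d \<tau>" "g \<in> SU2" "h \<in> SU2"
  shows "tensrep d \<tau> m (g ** h) f = tensrep d \<tau> m g (tensrep d \<tau> m h f)"
proof
  fix w
  show "tensrep d \<tau> m (g ** h) f w = tensrep d \<tau> m g (tensrep d \<tau> m h f) w"
  proof (cases "w \<in> words d m")
    case False
    then show ?thesis
      by (simp add: tensrep_def)
  next
    case w: True
    have entry: "(\<Prod>i<m. \<tau> (g ** h) (w ! i) (v ! i)) =
        (\<Sum>u\<in>words d m. (\<Prod>i<m. \<tau> g (w ! i) (u ! i)) * (\<Prod>i<m. \<tau> h (u ! i) (v ! i)))"
      if "v \<in> words d m" for v
    proof -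
      have "(\<Prod>i<m. \<tau> (g ** h) (w ! i) (v ! i)) = (\<Prod>i<m. \<Sum>j<d. \<tau> g (w ! i) j * \<tau> h j (v ! i))"
        using w that by (intro prod.cong refl unitary_rep_SU2_mult[OF assms])
          (auto intro: words_nth_less)
      also have "\<dots> = (\<Sum>u\<in>words d m. \<Prod>i<m. \<tau> g (w ! i) (u ! i) * \<tau> h (u ! i) (v ! i))"
        by (rule sum_words_prod[symmetric])
      finally show ?thesis
        by (simp add: prod.distrib)
    qed
    have "tensrep d \<tau> m (g ** h) f w = (\<Sum>v\<in>words d m. \<Sum>u\<in>words d m.
        (\<Prod>i<m. \<tau> g (w ! i) (u ! i)) * ((\<Prod>i<m. \<tau> h (u ! i) (v ! i)) * f v))"
      using w by (simp add: tensrep_def entry sum_distrib_right mult.assoc)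
    also have "\<dots> = tensrep d \<tau> m g (tensrep d \<tau> m h f) w"
      using w by (subst sum.swap) (simp add: tensrep_def sum_distrib_left)
    finally show ?thesis .
  qed
qed

lemma tensrep_one:
  assumes "unitary_rep_SU2 d \<tau>" "f \<in> tens d m"
  shows "tensrep d \<tau> m (mat 1) f = f"
proof
  fix w
  show "tensrep d \<tau> m (mat 1) f w = f w"
  proof (cases "w \<in> words d m")
    case False
    then show ?thesis
      using assms(2) by (simp add: tensrep_def tens_vanishes)
  next
    case w: True
    have delta: "(\<Prod>i<m. \<tau> (mat 1) (w ! i) (v ! i)) * f v = (if w = v then f v else 0)"
      if "v \<in> words d m" for v
    proof -
      have "(\<Prod>i<m. \<tau> (mat 1) (w ! i) (v ! i)) = (\<Prod>i<m. if w ! i = v ! i then 1 else 0)"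
        using w that by (intro prod.cong refl unitary_rep_SU2_one[OF assms(1)])
          (auto intro: words_nth_less)
      also have "\<dots> = (if w = v then 1 else 0)"
        using w that by (intro prod_nth_eq_indicator) (auto simp: words_length)
      finally show ?thesis
        by simp
    qed
    show ?thesis
      using w finite_words by (simp add: tensrep_def delta cong: sum.cong)
  qed
qed

lemma ip_matrix_action:
  "ip A (\<lambda>w. \<Sum>v\<in>B. P w v * f v) (\<lambda>w. \<Sum>v\<in>B. P w v * h v) =
    (\<Sum>v\<in>B. \<Sum>v'\<in>B. cnj (f v) * h v' * (\<Sum>w\<in>A. cnj (P w v) * P w v'))"
proof -
  have "ip A (\<lambda>w. \<Sum>v\<in>B. P w v * f v) (\<lambda>w. \<Sum>v\<in>B. P w v * h v) =
      (\<Sum>w\<in>A. \<Sum>v\<in>B. \<Sum>v'\<in>B. cnj (P w v * f v) * (P w v' * h v'))"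
    by (simp add: ip_def cnj_sum sum_product)
  also have "\<dots> = (\<Sum>w\<in>A. \<Sum>v\<in>B. \<Sum>v'\<in>B. cnj (f v) * h v' * (cnj (P w v) * P w v'))"
    by (simp add: mult_ac)
  also have "\<dots> = (\<Sum>v\<in>B. \<Sum>v'\<in>B. \<Sum>w\<in>A. cnj (f v) * h v' * (cnj (P w v) * P w v'))"
    by (simp only: sum.swap[of _ A])
  finally show ?thesis
    by (simp add: sum_distrib_left)
qed

lemma tensrep_unitary:
  assumes "unitary_rep_SU2 d \<tau>" "g \<in> SU2"
  shows "ip (words d m) (tensrep d \<tau> m g f) (tensrep d \<tau> m g h) = ip (words d m) f h"
proof -
  let ?P = "\<lambda>w v. \<Prod>i<m. \<tau> g (w ! i) (v ! i)"
  have columns: "(\<Sum>w\<in>words d m. cnj (?P w v) * ?P w v') = (if v = v' then 1 else 0)"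
    if "v \<in> words d m" "v' \<in> words d m" for v v'
  proof -
    have "(\<Sum>w\<in>words d m. cnj (?P w v) * ?P w v') =
        (\<Prod>i<m. \<Sum>j<d. cnj (\<tau> g j (v ! i)) * \<tau> g j (v' ! i))"
      by (simp add: prod.distrib sum_words_prod[symmetric])
    also have "\<dots> = (\<Prod>i<m. if v ! i = v' ! i then 1 else 0)"
      using that by (intro prod.cong refl unitary_rep_SU2_orthonormal[OF assms])
        (auto intro: words_nth_less)
    also have "\<dots> = (if v = v' then 1 else 0)"
      using that by (intro prod_nth_eq_indicator) (auto simp: words_length)
    finally show ?thesis .
  qed
  have "ip (words d m) (tensrep d \<tau> m g f) (tensrep d \<tau> m g h) =
      ip (words d m) (\<lambda>w. \<Sum>v\<in>words d m. ?P w v * f v) (\<lambda>w. \<Sum>v\<in>words d m. ?P w v * h v)"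
    by (simp add: ip_def tensrep_def)
  also have "\<dots> = (\<Sum>v\<in>words d m. \<Sum>v'\<in>words d m. cnj (f v) * h v' * (if v = v' then 1 else 0))"
    unfolding ip_matrix_action by (intro sum.cong refl) (simp only: columns)
  also have "\<dots> = ip (words d m) f h"
    by (simp add: ip_def finite_words if_distrib cong: if_cong)
  finally show ?thesis .
qed

lemma tensrep_continuous:
  assumes "unitary_rep_SU2 d \<tau>"
  shows "continuous_on SU2 (\<lambda>g. tensrep d \<tau> m g f w)"
proof (cases "w \<in> words d m")
  case True
  have "continuous_on SU2 (\<lambda>g. \<Sum>v\<in>words d m. (\<Prod>i<m. \<tau> g (w ! i) (v ! i)) * f v)"
    using True by (intro continuous_intros unitary_rep_SU2_continuous_entry[OF assms])
      (auto intro: words_nth_less)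
  then show ?thesis
    using True by (simp add: tensrep_def)
qed (simp add: tensrep_def)

section \<open>The subspaces K_m and E_m\<close>

text \<open>Generators of K_m, indexed by the numbers p = i - 1 and q = m - i - 1 of letters before
  and after the det(\<tau>,H) factor rather than by its position i; this avoids truncated
  subtraction.\<close>

definition Kgen :: "nat \<Rightarrow> (complex^2^2 \<Rightarrow> nat \<Rightarrow> nat \<Rightarrow> complex) \<Rightarrow> nat \<Rightarrow> (nat list \<Rightarrow> complex) set"
  where "Kgen d \<tau> m = {tprod p a (tprod 2 z b) | p q a z b.
    p + 2 + q = m \<and> a \<in> tens d p \<and> z \<in> detsp d \<tau> \<and> b \<in> tens d q}"

lemma KgenI:
  "p + 2 + q = m \<Longrightarrow> a \<in> tens d p \<Longrightarrow> z \<in> detsp d \<tau> \<Longrightarrow> b \<in> tens d q \<Longrightarrow>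
    tprod p a (tprod 2 z b) \<in> Kgen d \<tau> m"
  unfolding Kgen_def by blast

lemma KgenE:
  assumes "t \<in> Kgen d \<tau> m"
  obtains p q a z b where "p + 2 + q = m" "t = tprod p a (tprod 2 z b)"
    "a \<in> tens d p" "z \<in> detsp d \<tau>" "b \<in> tens d q"
  using assms unfolding Kgen_def by blast

lemma Ksp_eq_cspan_Kgen: "Ksp d \<tau> m = cspan (Kgen d \<tau> m)"
proof -
  have "(\<Union>i\<in>{1..m-1}. {tprod (i - 1) a (tprod 2 z b) | a z b.
      a \<in> tens d (i - 1) \<and> z \<in> detsp d \<tau> \<and> b \<in> tens d (m - i - 1)}) = Kgen d \<tau> m"
    (is "?U = _")
  proof (intro equalityI subsetI)
    fix t
    assume "t \<in> ?U"
    then obtain i a z b where "i \<in> {1..m-1}" "t = tprod (i - 1) a (tprod 2 z b)"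
      "a \<in> tens d (i - 1)" "z \<in> detsp d \<tau>" "b \<in> tens d (m - i - 1)"
      by blast
    then show "t \<in> Kgen d \<tau> m"
      using KgenI[where q = "m - i - 1"] by auto
  next
    fix t
    assume "t \<in> Kgen d \<tau> m"
    then obtain p q a z b where m: "p + 2 + q = m" and t: "t = tprod p a (tprod 2 z b)"
      and abz: "a \<in> tens d p" "z \<in> detsp d \<tau>" "b \<in> tens d q"
      by (rule KgenE)
    then have i: "p + 1 \<in> {1..m-1}" and i_eqs: "p + 1 - 1 = p" "m - (p + 1) - 1 = q"
      by auto
    show "t \<in> ?U"
    proof (rule UN_I[OF i])
      show "t \<in> {tprod (p + 1 - 1) a (tprod 2 z b) | a z b.
        a \<in> tens d (p + 1 - 1) \<and> z \<in> detsp d \<tau> \<and> b \<in> tens d (m - (p + 1) - 1)}"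
        unfolding i_eqs using t abz by blast
    qed
  qed
  then show ?thesis
    by (simp add: Ksp_def)
qed

lemma Kgen_subset_tens: "Kgen d \<tau> m \<subseteq> tens d m"
proof
  fix t
  assume "t \<in> Kgen d \<tau> m"
  then obtain p q a z b where "p + (2 + q) = m" "t = tprod p a (tprod 2 z b)"
    "a \<in> tens d p" "z \<in> tens d 2" "b \<in> tens d q"
    by (rule KgenE) (auto simp: detsp_def)
  then show "t \<in> tens d m"
    by (metis tprod_in_tens)
qed

lemma Ksp_subset_tens: "Ksp d \<tau> m \<subseteq> tens d m"
  unfolding Ksp_eq_cspan_Kgen by (rule cspan_minimal[OF csubspace_tens Kgen_subset_tens])

lemma Ksp_0: "Ksp d \<tau> 0 = {\<lambda>x. 0}"
proof -
  have "Kgen d \<tau> 0 = {}"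
    by (simp add: Kgen_def)
  then show ?thesis
    by (auto simp: Ksp_eq_cspan_Kgen cspan_def)
qed

lemma tprod_Kgen_right:
  assumes "t \<in> Kgen d \<tau> k" "c \<in> tens d n"
  shows "tprod k t c \<in> Kgen d \<tau> (k + n)"
proof -
  obtain p q a z b where "p + 2 + q = k" "t = tprod p a (tprod 2 z b)"
    "a \<in> tens d p" "z \<in> detsp d \<tau>" "b \<in> tens d q"
    using assms(1) by (rule KgenE)
  then show ?thesis
    using KgenI[of p "q + n" "k + n" a d z \<tau> "tprod q b c"] tprod_in_tens[OF _ assms(2)]
    by (simp add: tprod_assoc add.assoc)
qed

lemma tprod_Kgen_left:
  assumes "a \<in> tens d k" "t \<in> Kgen d \<tau> m"
  shows "tprod k a t \<in> Kgen d \<tau> (k + m)"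
proof -
  obtain p q a' z b where "p + 2 + q = m" "t = tprod p a' (tprod 2 z b)"
    "a' \<in> tens d p" "z \<in> detsp d \<tau>" "b \<in> tens d q"
    using assms(2) by (rule KgenE)
  then show ?thesis
    using KgenI[of "k + p" q "k + m" "tprod k a a'" d z \<tau> b] tprod_in_tens[OF assms(1)]
    by (simp add: tprod_assoc add.assoc)
qed

lemma tprod_Ksp_right: "\<eta> \<in> Ksp d \<tau> k \<Longrightarrow> c \<in> tens d n \<Longrightarrow> tprod k \<eta> c \<in> Ksp d \<tau> (k + n)"
  unfolding Ksp_eq_cspan_Kgen
  by (rule cspan_map[where \<Phi> = "\<lambda>f. tprod k f c"]) (auto intro: tprod_Kgen_right tprod_sum_left)

lemma tprod_Ksp_left: "a \<in> tens d k \<Longrightarrow> \<eta> \<in> Ksp d \<tau> m \<Longrightarrow> tprod k a \<eta> \<in> Ksp d \<tau> (k + m)"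
  unfolding Ksp_eq_cspan_Kgen
  by (rule cspan_map[where \<Phi> = "tprod k a"]) (auto intro: tprod_Kgen_left tprod_sum_right)

lemma tensrep_Kgen:
  assumes "g \<in> SU2" "t \<in> Kgen d \<tau> m"
  shows "tensrep d \<tau> m g t \<in> Kgen d \<tau> m"
proof -
  obtain p q a z b where m: "p + 2 + q = m" and t: "t = tprod p a (tprod 2 z b)"
    and z: "z \<in> detsp d \<tau>"
    using assms(2) by (rule KgenE)
  have "m = p + (2 + q)"
    using m by simp
  then have "tensrep d \<tau> m g t =
      tprod p (tensrep d \<tau> p g a) (tprod 2 (tensrep d \<tau> 2 g z) (tensrep d \<tau> q g b))"
    by (simp only: t tensrep_tprod)
  also have "tensrep d \<tau> 2 g z = z"
    using assms(1) z by (simp add: detsp_def)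
  finally show ?thesis
    using KgenI[OF m tensrep_in_tens z tensrep_in_tens] by simp
qed

lemma tensrep_Ksp: "g \<in> SU2 \<Longrightarrow> \<eta> \<in> Ksp d \<tau> m \<Longrightarrow> tensrep d \<tau> m g \<eta> \<in> Ksp d \<tau> m"
  unfolding Ksp_eq_cspan_Kgen
  by (rule cspan_map[where \<Phi> = "tensrep d \<tau> m g"]) (auto intro: tensrep_Kgen tensrep_sum)

lemma Esp_subset_tens: "Esp d \<tau> m \<subseteq> tens d m"
  by (auto simp: Esp_def)

lemma csubspace_Esp: "csubspace (Esp d \<tau> m)"
proof -
  have "ip (words d m) \<eta> (\<lambda>x. c * f x + g x) = c * ip (words d m) \<eta> f + ip (words d m) \<eta> g"
    for \<eta> f g c
    by (simp add: ip_def sum.distrib sum_distrib_left algebra_simps)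
  then show ?thesis
    using csubspace_zero[OF csubspace_tens] csubspace_lincomb[OF csubspace_tens]
    by (auto simp: csubspace_def Esp_def ip_def)
qed

lemma Esp_0: "Esp d \<tau> 0 = {(\<lambda>w. if w = [] then c else 0) | c. True}"
proof (intro equalityI subsetI)
  fix \<xi>
  assume "\<xi> \<in> Esp d \<tau> 0"
  then have "\<xi> = (\<lambda>w. if w = [] then \<xi> [] else 0)"
    by (intro ext) (auto simp: Esp_def tens_def words_0)
  then show "\<xi> \<in> {(\<lambda>w. if w = [] then c else 0) | c. True}"
    by blast
qed (auto simp: Esp_def tens_def Ksp_0 ip_def words_0 split: if_splits)

lemma
  assumes "g \<in> SU2"
  shows adj2_in_SU2: "adj2 g \<in> SU2" and SU2_mult_adj2: "g ** adj2 g = mat 1"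
proof -
  have "adj2 g ** g = mat 1" "det g = 1"
    using assms by (auto simp: SU2_def)
  moreover have "adj2 (adj2 g) = g"
    by (simp add: adj2_def vec_eq_iff)
  ultimately show "g ** adj2 g = mat 1" "adj2 g \<in> SU2"
    using det_mul[of "adj2 g" g] matrix_left_right_inverse by (auto simp: SU2_def)
qed

lemma tensrep_adj2_inverse:
  assumes "unitary_rep_SU2 d \<tau>" "g \<in> SU2" "f \<in> tens d m"
  shows "tensrep d \<tau> m g (tensrep d \<tau> m (adj2 g) f) = f"
  using assms by (simp add: tensrep_mult[symmetric] adj2_in_SU2 SU2_mult_adj2 tensrep_one)

lemma tensrep_Esp:
  assumes "unitary_rep_SU2 d \<tau>" "g \<in> SU2" "\<xi> \<in> Esp d \<tau> m"
  shows "tensrep d \<tau> m g \<xi> \<in> Esp d \<tau> m"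
proof -
  have "ip (words d m) \<eta> (tensrep d \<tau> m g \<xi>) = 0" if "\<eta> \<in> Ksp d \<tau> m" for \<eta>
  proof -
    let ?\<eta>' = "tensrep d \<tau> m (adj2 g) \<eta>"
    have "ip (words d m) \<eta> (tensrep d \<tau> m g \<xi>) =
        ip (words d m) (tensrep d \<tau> m g ?\<eta>') (tensrep d \<tau> m g \<xi>)"
      using that Ksp_subset_tens by (simp add: tensrep_adj2_inverse[OF assms(1,2)] subset_iff)
    also have "\<dots> = ip (words d m) ?\<eta>' \<xi>"
      by (rule tensrep_unitary[OF assms(1,2)])
    also have "\<dots> = 0"
      using assms(3) tensrep_Ksp[OF adj2_in_SU2[OF assms(2)] that] by (simp add: Esp_def)
    finally show ?thesis .
  qed
  then show ?thesis
    by (simp add: Esp_def tensrep_in_tens)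
qed

lemma tensrep_image_Esp:
  assumes "unitary_rep_SU2 d \<tau>" "g \<in> SU2"
  shows "tensrep d \<tau> m g ` Esp d \<tau> m = Esp d \<tau> m"
proof
  show "tensrep d \<tau> m g ` Esp d \<tau> m \<subseteq> Esp d \<tau> m"
    using tensrep_Esp[OF assms] by blast
  show "Esp d \<tau> m \<subseteq> tensrep d \<tau> m g ` Esp d \<tau> m"
  proof
    fix \<xi>
    assume "\<xi> \<in> Esp d \<tau> m"
    then show "\<xi> \<in> tensrep d \<tau> m g ` Esp d \<tau> m"
      using tensrep_adj2_inverse[OF assms] tensrep_Esp[OF assms(1) adj2_in_SU2[OF assms(2)]]
        Esp_subset_tens
      by (metis image_eqI subsetD)
  qed
qed

section \<open>The maps \<iota>_(k,m)\<close>

lemma iota_support: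
  assumes "\<xi> \<in> tens d (k + m)" "iota k m \<xi> (u, v) \<noteq> 0"
  shows "u \<in> words d k \<and> v \<in> words d m"
  using assms append_in_words_iff by (auto simp: iota_def tens_def split: if_splits)

lemma iota_slice_left_in_Esp:
  assumes "\<xi> \<in> Esp d \<tau> (k + m)"
  shows "(\<lambda>u. iota k m \<xi> (u, v)) \<in> Esp d \<tau> k"
proof -
  have \<xi>: "\<xi> \<in> tens d (k + m)"
    using assms Esp_subset_tens by blast
  have "ip (words d k) \<eta> (\<lambda>u. iota k m \<xi> (u, v)) = 0" if \<eta>: "\<eta> \<in> Ksp d \<tau> k" for \<eta>
  proof (cases "v \<in> words d m")
    case True
    have "ip (words d k) \<eta> (\<lambda>u. iota k m \<xi> (u, v)) = (\<Sum>u\<in>words d k. cnj (\<eta> u) * \<xi> (u @ v))"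
      by (simp add: ip_def iota_def words_length cong: sum.cong)
    also have "\<dots> = ip (words d (k + m)) (tprod k \<eta> (word_basis v)) \<xi>"
      by (rule ip_tprod_word_basis_right[OF True, symmetric])
    also have "\<dots> = 0"
      using assms tprod_Ksp_right[OF \<eta> word_basis_in_tens[OF True]] by (simp add: Esp_def)
    finally show ?thesis .
  next
    case False
    then have "iota k m \<xi> (u, v) = 0" for u
      using iota_support[OF \<xi>] by blast
    then show ?thesis
      by (simp add: ip_def)
  qed
  moreover have "(\<lambda>u. iota k m \<xi> (u, v)) \<in> tens d k"
    using iota_support[OF \<xi>] by (auto simp: tens_def)
  ultimately show ?thesis
    by (simp add: Esp_def)
qed

lemma iota_slice_right_in_Esp:
  assumes "\<xi> \<in> Esp d \<tau> (k + m)"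
  shows "(\<lambda>v. iota k m \<xi> (u, v)) \<in> Esp d \<tau> m"
proof -
  have \<xi>: "\<xi> \<in> tens d (k + m)"
    using assms Esp_subset_tens by blast
  have "ip (words d m) \<eta> (\<lambda>v. iota k m \<xi> (u, v)) = 0" if \<eta>: "\<eta> \<in> Ksp d \<tau> m" for \<eta>
  proof (cases "u \<in> words d k")
    case True
    have "ip (words d m) \<eta> (\<lambda>v. iota k m \<xi> (u, v)) = (\<Sum>v\<in>words d m. cnj (\<eta> v) * \<xi> (u @ v))"
      using True by (simp add: ip_def iota_def words_length)
    also have "\<dots> = ip (words d (k + m)) (tprod k (word_basis u) \<eta>) \<xi>"
      by (rule ip_tprod_word_basis_left[OF True, symmetric])
    also have "\<dots> = 0"
      using assms tprod_Ksp_left[OF word_basis_in_tens[OF True] \<eta>] by (simp add: Esp_def)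
    finally show ?thesis .
  next
    case False
    then have "iota k m \<xi> (u, v) = 0" for v
      using iota_support[OF \<xi>] by blast
    then show ?thesis
      by (simp add: ip_def)
  qed
  moreover have "(\<lambda>v. iota k m \<xi> (u, v)) \<in> tens d m"
    using iota_support[OF \<xi>] by (auto simp: tens_def)
  ultimately show ?thesis
    by (simp add: Esp_def)
qed

lemma iota_in_htensor:
  assumes "\<xi> \<in> Esp d \<tau> (k + m)"
  shows "iota k m \<xi> \<in> htensor (Esp d \<tau> k) (Esp d \<tau> m)"
  using finite_words csubspace_Esp csubspace_Esp
proof (rule htensor_if_slices)
  show "f a = 0" if "f \<in> Esp d \<tau> k" "a \<notin> words d k" for f a
    using that Esp_subset_tens tens_vanishes by blast
qed (use assms iota_slice_left_in_Esp iota_slice_right_in_Esp in blast)+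

lemma iota_isometry:
  "ip (words d k \<times> words d m) (iota k m \<xi>) (iota k m \<eta>) = ip (words d (k + m)) \<xi> \<eta>"
proof -
  have "ip (words d k \<times> words d m) (iota k m \<xi>) (iota k m \<eta>) =
      (\<Sum>u\<in>words d k. \<Sum>v\<in>words d m. cnj (iota k m \<xi> (u, v)) * iota k m \<eta> (u, v))"
    by (simp add: ip_def sum.cartesian_product)
  also have "\<dots> = ip (words d (k + m)) \<xi> \<eta>"
    by (simp add: ip_def sum_words_add iota_def words_length cong: sum.cong)
  finally show ?thesis .
qed

lemma iota_equivariant:
  "iota k m (tensrep d \<tau> (k + m) g \<xi>) = map_tensor (tensrep d \<tau> k g) (tensrep d \<tau> m g) (iota k m \<xi>)"
proof (intro ext, clarify)
  fix u v
  show "iota k m (tensrep d \<tau> (k + m) g \<xi>) (u, v) =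
      map_tensor (tensrep d \<tau> k g) (tensrep d \<tau> m g) (iota k m \<xi>) (u, v)"
  proof (cases "u \<in> words d k \<and> v \<in> words d m")
    case False
    then have "iota k m (tensrep d \<tau> (k + m) g \<xi>) (u, v) = 0"
      using iota_support[OF tensrep_in_tens] by blast
    moreover have "map_tensor (tensrep d \<tau> k g) (tensrep d \<tau> m g) (iota k m \<xi>) (u, v) = 0"
      using False by (auto simp: map_tensor_def tensrep_def)
    ultimately show ?thesis
      by simp
  next
    case True
    then have u: "length u = k"
      using words_length by blast
    have "iota k m (tensrep d \<tau> (k + m) g \<xi>) (u, v) = (\<Sum>u'\<in>words d k. \<Sum>v'\<in>words d m.
        (\<Prod>i<k + m. \<tau> g ((u @ v) ! i) ((u' @ v') ! i)) * \<xi> (u' @ v'))"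
      using True u by (simp add: iota_def tensrep_def append_in_words_iff sum_words_add)
    also have "\<dots> = (\<Sum>u'\<in>words d k. (\<Prod>i<k. \<tau> g (u ! i) (u' ! i)) *
        (\<Sum>v'\<in>words d m. (\<Prod>i<m. \<tau> g (v ! i) (v' ! i)) * iota k m \<xi> (u', v')))"
      using u by (auto simp: sum_distrib_left prod_nth_append words_length iota_def mult_ac
          intro!: sum.cong)
    also have "\<dots> = map_tensor (tensrep d \<tau> k g) (tensrep d \<tau> m g) (iota k m \<xi>) (u, v)"
      using True by (simp add: map_tensor_def tensrep_def)
    finally show ?thesis .
  qed
qed

lemma iota_0_left: "iota 0 m \<xi> = (\<lambda>(u, v). if u = [] then \<xi> v else 0)"
  by (auto simp: iota_def)

lemma iota_0_right:
  assumes "\<xi> \<in> tens d m"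
  shows "iota m 0 \<xi> = (\<lambda>(u, v). if v = [] then \<xi> u else 0)"
proof (intro ext, clarify)
  fix u v :: "nat list"
  have "\<xi> (u @ v) = 0" if "length u = m" "v \<noteq> []"
    using that assms by (intro tens_vanishes) (auto simp: words_def)
  moreover have "\<xi> u = 0" if "length u \<noteq> m"
    using that assms by (intro tens_vanishes) (auto simp: words_def)
  ultimately show "iota m 0 \<xi> (u, v) = (if v = [] then \<xi> u else 0)"
    by (auto simp: iota_def)
qed

lemma iota_coassoc:
  "id_tensor (iota l m) (iota k (l + m) \<xi>) (u, v, w) =
    tensor_id (iota k l) (iota (k + l) m \<xi>) ((u, v), w)"
  by (simp add: id_tensor_def tensor_id_def iota_def)

lemma clinear_on_iota: "clinear_on V (iota k m)"
  by (auto simp: clinear_on_def iota_def)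

lemma clinear_on_tensrep: "clinear_on V (tensrep d \<tau> m g)"
  by (simp add: clinear_on_def tensrep_lincomb)

theorem proposition2p3:
  fixes d :: nat and \<tau> :: "complex^2^2 \<Rightarrow> nat \<Rightarrow> nat \<Rightarrow> complex"
  assumes "unitary_rep_SU2 d \<tau>"
  shows "SU2_subproduct_system d (Esp d \<tau>) iota (tensrep d \<tau>)"
proof -
  have Esp_tens: "\<xi> \<in> Esp d \<tau> m \<Longrightarrow> \<xi> \<in> tens d m" for \<xi> m
    using Esp_subset_tens by blast
  show ?thesis
    unfolding SU2_subproduct_system_def
    by (intro conjI allI ballI Esp_0)
      (simp_all add: Esp_tens Esp_subset_tens csubspace_Esp clinear_on_iota clinear_on_tensrep
        iota_in_htensor iota_isometry iota_0_left iota_0_right[OF Esp_tens] iota_coassoc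
        iota_equivariant tensrep_image_Esp[OF assms] tensrep_unitary[OF assms]
        tensrep_mult[OF assms] tensrep_one[OF assms] tensrep_continuous[OF assms] tensrep_0)
qed

end
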